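(* Let $q\in[1,2]$, $J,L\in\mathbb N$, let $\mathbf C_0$ be a fixed $J\times J$ symmetric positive-definite matrix, and let $\kappa>0$ be random with hyper-prior $\kappa^{q/2}\sim\Gamma^{-1}(\alpha,\beta)$ (inverse-gamma with shape $\alpha>0$, scale $\beta>0$). Suppose that, conditionally on $\kappa$, $\boldsymbol\xi_1,\dots,\boldsymbol\xi_L\in\mathbb R^J$ are i.i.d. $\mathrm{q\text{-}ED}_J(\mathbf 0,\kappa\mathbf C_0)$. Let $r_{0,\ell}=\boldsymbol\xi_\ell^\top\mathbf C_0^{-1}\boldsymbol\xi_\ell$. Then $$\kappa^{q/2}\mid\boldsymbol\xi_1,\dots,\boldsymbol\xi_L\sim\Gamma^{-1}(\alpha',\beta'),\qquad \alpha'=\alpha+\frac{JL}2,\qquad \beta'=\beta+\frac12\sum_{\ell=1}^Lr_{0,\ell}^{q/2}.$$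
   Context: $\mathrm{q\text{-}ED}_J(\mathbf 0,\mathbf C)$ denotes the multivariate $q$-exponential distribution on $\mathbb R^J$ with density $p(\boldsymbol\xi)=\frac q2(2\pi)^{-J/2}|\mathbf C|^{-1/2}r^{(\frac q2-1)\frac J2}\exp\{-\frac12r^{q/2}\}$, $r=\boldsymbol\xi^\top\mathbf C^{-1}\boldsymbol\xi$. $\Gamma^{-1}(\alpha,\beta)$ has density $\frac{\beta^\alpha}{\Gamma(\alpha)}x^{-\alpha-1}e^{-\beta/x}$ on $x>0$. *)

theory Defs
  imports "HOL-Analysis.Analysis"
begin

definition inv_gamma_density :: "real \<Rightarrow> real \<Rightarrow> real \<Rightarrow> real" where
  "inv_gamma_density a b x =
     (if x > 0 then b powr a / Gamma a * x powr (- a - 1) * exp (- b / x) else 0)"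

text \<open>Density of the multivariate q-exponential distribution q-ED_J(0, C) on R^J,
  where J = CARD('n).\<close>
definition qED_density :: "real \<Rightarrow> real^'n^'n \<Rightarrow> real^'n \<Rightarrow> real" where
  "qED_density q C xi =
     (let r = xi \<bullet> (matrix_inv C *v xi) in
        q / 2 * (2 * pi) powr (- real CARD('n) / 2) * \<bar>det C\<bar> powr (- 1 / 2)
        * r powr ((q / 2 - 1) * real CARD('n) / 2) * exp (- 1 / 2 * r powr (q / 2)))"

text \<open>Joint density of (tau, xi_1..xi_L) where tau = kappa^(q/2) ~ InvGamma(alpha, beta)
  and, given kappa = tau^(2/q), the xi_l are iid q-ED_J(0, kappa C0).\<close>
definition joint_density ::
  "real \<Rightarrow> real \<Rightarrow> real \<Rightarrow> real^'n^'n \<Rightarrow> nat \<Rightarrow> (nat \<Rightarrow> real^'n) \<Rightarrow> real \<Rightarrow> real" where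
  "joint_density q \<alpha> \<beta> C0 L xi \<tau> =
     inv_gamma_density \<alpha> \<beta> \<tau> * (\<Prod>l<L. qED_density q ((\<tau> powr (2 / q)) *\<^sub>R C0) (xi l))"

definition posterior_density ::
  "real \<Rightarrow> real \<Rightarrow> real \<Rightarrow> real^'n^'n \<Rightarrow> nat \<Rightarrow> (nat \<Rightarrow> real^'n) \<Rightarrow> real \<Rightarrow> real" where
  "posterior_density q \<alpha> \<beta> C0 L xi \<tau> =
     joint_density q \<alpha> \<beta> C0 L xi \<tau> / integral\<^sup>L lborel (joint_density q \<alpha> \<beta> C0 L xi)"

end

theory Submission
  imports Defs
begin

(* With tau = kappa^(q/2), the q-ED density of xi under the covariance tau^(2/q) C0 depends on tau
   only through the factor tau^(-J/2) exp(-r^(q/2) / (2 tau)), where r = xi' C0^-1 xi.  Hence the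
   joint density of (tau, xi_1, ..., xi_L) is, as a function of tau, the inverse-gamma kernel
   tau^(-alpha-1) exp(-beta/tau) multiplied by tau^(-JL/2) exp(-(sum_l r_l^(q/2)/2) / tau), i.e. a
   constant multiple of the InvGamma(alpha', beta') density.  Since that density integrates to 1
   (substitute x = beta'/t in the Gamma integral), Bayes' formula returns it exactly. *)

lemma Gamma_has_integral_Ioi:
  fixes a :: real
  assumes "a > 0"
  shows "((\<lambda>t. t powr (a - 1) / exp t) has_integral Gamma a) {0<..}"
proof -
  have "((\<lambda>t. t powr (a - 1) / exp t) has_integral Gamma a) {0..}"
    using Gamma_integral_real assms .
  then have "((\<lambda>t. if t \<in> {0<..} then t powr (a - 1) / exp t else 0) has_integral Gamma a) {0..}"
    by (rule has_integral_spike[of "{0}", rotated 2]) auto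
  then show ?thesis
    by (subst (asm) has_integral_restrict) auto
qed

lemma inv_gamma_kernel_has_integral:
  fixes a b :: real
  assumes "a > 0" and "b > 0"
  shows "((\<lambda>x. b powr a * x powr (- a - 1) * exp (- b / x)) has_integral Gamma a) {0<..}"
proof -
  let ?f = "\<lambda>t::real. t powr (a - 1) / exp t"
  have f: "?f absolutely_integrable_on {0<..}" "integral {0<..} ?f = Gamma a"
    using Gamma_has_integral_Ioi[OF \<open>a > 0\<close>]
    by (auto intro: nonnegative_absolutely_integrable_1 integral_unique)
  have image: "(\<lambda>x. b / x) ` {0<..} = {0<..}"
  proof safe
    fix y :: real
    assume "y > 0"
    with \<open>b > 0\<close> show "y \<in> (\<lambda>x. b / x) ` {0<..}"
      by (intro image_eqI[of _ _ "b / y"]) auto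
  qed (use \<open>b > 0\<close> in auto)
  have "(\<lambda>x. \<bar>- b / x\<^sup>2\<bar> * ?f (b / x)) absolutely_integrable_on {0<..} \<and>
      integral {0<..} (\<lambda>x. \<bar>- b / x\<^sup>2\<bar> * ?f (b / x)) = Gamma a"
  proof (rule has_absolute_integral_change_of_variables_1'
      [where f = ?f and g = "\<lambda>x. b / x" and g' = "\<lambda>x. - b / x\<^sup>2", THEN iffD2])
    fix x :: real
    assume "x \<in> {0<..}"
    then show "((\<lambda>x. b / x) has_field_derivative - b / x\<^sup>2) (at x within {0<..})"
      by (auto intro!: derivative_eq_intros simp: power2_eq_square)
  next
    show "inj_on (\<lambda>x. b / x) {0<..}"
      using \<open>b > 0\<close> by (auto simp: inj_on_def)
  qed (use f image in auto)
  then have "((\<lambda>x. \<bar>- b / x\<^sup>2\<bar> * ?f (b / x)) has_integral Gamma a) {0<..}"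
    using set_lebesgue_integral_eq_integral(1) has_integral_integral by metis
  then show ?thesis
    by (rule has_integral_eq[rotated]) (use \<open>b > 0\<close> in
        \<open>simp add: powr_divide powr_diff powr_minus powr_add exp_minus field_simps power2_eq_square\<close>)
qed

lemma inv_gamma_density_nonneg: "a > 0 \<Longrightarrow> b > 0 \<Longrightarrow> inv_gamma_density a b x \<ge> 0"
  using Gamma_real_pos[of a] by (simp add: inv_gamma_density_def)

lemma borel_measurable_inv_gamma_density [measurable]: "inv_gamma_density a b \<in> borel_measurable borel"
  unfolding inv_gamma_density_def[abs_def] by measurable

lemma integral_inv_gamma_density:
  fixes a b :: real
  assumes "a > 0" and "b > 0"
  shows "integral\<^sup>L lborel (inv_gamma_density a b) = 1"
proof -
  have density: "inv_gamma_density a b = (\<lambda>x. if x \<in> {0<..} then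
      b powr a * x powr (- a - 1) * exp (- b / x) / Gamma a else 0)"
    by (auto simp: inv_gamma_density_def fun_eq_iff)
  have "((\<lambda>x. b powr a * x powr (- a - 1) * exp (- b / x) / Gamma a) has_integral 1) {0<..}"
    using has_integral_divide[OF inv_gamma_kernel_has_integral[OF assms], of "Gamma a"]
      Gamma_real_pos[OF \<open>a > 0\<close>] by simp
  then have "(inv_gamma_density a b has_integral 1) UNIV"
    unfolding density has_integral_restrict_UNIV .
  then have nn: "(\<integral>\<^sup>+ x. ennreal (inv_gamma_density a b x) \<partial>lborel) = ennreal 1"
    using nn_integral_has_integral_lborel inv_gamma_density_nonneg[OF assms] by measurable
  have "integrable lborel (inv_gamma_density a b)"
    using nn inv_gamma_density_nonneg[OF assms] by (intro integrableI_nn_integral_finite[where x = 1]) auto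
  then show ?thesis
    using nn inv_gamma_density_nonneg[OF assms] by (simp add: integral_eq_nn_integral)
qed

lemma inv_gamma_density_mult_conjugate:
  assumes "\<alpha> + m > 0" and "\<beta> + s > 0"
  shows "inv_gamma_density \<alpha> \<beta> \<tau> * (\<tau> powr (- m) * exp (- s / \<tau>)) =
    \<beta> powr \<alpha> / Gamma \<alpha> * (Gamma (\<alpha> + m) / (\<beta> + s) powr (\<alpha> + m))
    * inv_gamma_density (\<alpha> + m) (\<beta> + s) \<tau>"
proof (cases "\<tau> > 0")
  case True
  have powers: "\<tau> powr (- \<alpha> - 1) * \<tau> powr (- m) = \<tau> powr (- (\<alpha> + m) - 1)"
    unfolding powr_add[symmetric] by (rule arg_cong[where f = "(powr) \<tau>"]) simp
  have exps: "exp (- \<beta> / \<tau>) * exp (- s / \<tau>) = exp (- (\<beta> + s) / \<tau>)"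
    by (simp add: exp_add[symmetric] diff_divide_distrib)
  have "Gamma (\<alpha> + m) > 0" and "(\<beta> + s) powr (\<alpha> + m) > 0"
    using assms by (simp_all add: Gamma_real_pos)
  then have cancel: "Gamma (\<alpha> + m) / (\<beta> + s) powr (\<alpha> + m) * ((\<beta> + s) powr (\<alpha> + m) / Gamma (\<alpha> + m)) = 1"
    by simp
  have "inv_gamma_density \<alpha> \<beta> \<tau> * (\<tau> powr (- m) * exp (- s / \<tau>))
      = \<beta> powr \<alpha> / Gamma \<alpha> * (\<tau> powr (- \<alpha> - 1) * \<tau> powr (- m)) * (exp (- \<beta> / \<tau>) * exp (- s / \<tau>))"
    using True by (simp add: inv_gamma_density_def mult_ac)
  also have "\<dots> = \<beta> powr \<alpha> / Gamma \<alpha>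
      * (Gamma (\<alpha> + m) / (\<beta> + s) powr (\<alpha> + m) * ((\<beta> + s) powr (\<alpha> + m) / Gamma (\<alpha> + m)))
      * (\<tau> powr (- (\<alpha> + m) - 1) * exp (- (\<beta> + s) / \<tau>))"
    unfolding powers exps cancel by simp
  also have "\<dots> = \<beta> powr \<alpha> / Gamma \<alpha> * (Gamma (\<alpha> + m) / (\<beta> + s) powr (\<alpha> + m))
      * inv_gamma_density (\<alpha> + m) (\<beta> + s) \<tau>"
    using True by (simp add: inv_gamma_density_def mult_ac)
  finally show ?thesis .
qed (simp add: inv_gamma_density_def)

lemma matrix_inv_cancel:
  fixes A :: "real^'n^'n"
  assumes "invertible A"
  shows "A *v (matrix_inv A *v x) = x" and "matrix_inv A *v (A *v x) = x"
proof -
  have "A ** matrix_inv A = mat 1 \<and> matrix_inv A ** A = mat 1"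
    using assms unfolding invertible_def matrix_inv_def by (rule someI_ex)
  then show "A *v (matrix_inv A *v x) = x" and "matrix_inv A *v (A *v x) = x"
    by (simp_all add: matrix_vector_mul_assoc)
qed

lemma pos_def_invertible:
  fixes C :: "real^'n^'n"
  assumes "\<forall>x. x \<noteq> 0 \<longrightarrow> x \<bullet> (C *v x) > 0"
  shows "invertible C"
proof -
  have "inj ((*v) C)"
    by (rule linear_injective_0[THEN iffD2], simp add: matrix_vector_mul_linear)
       (use assms in fastforce)
  then show ?thesis
    using invertible_left_inverse matrix_left_invertible_injective by blast
qed

lemma pos_def_matrix_inv_quadratic_pos:
  fixes C :: "real^'n^'n"
  assumes pd: "\<forall>x. x \<noteq> 0 \<longrightarrow> x \<bullet> (C *v x) > 0" and "\<xi> \<noteq> 0"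
  shows "\<xi> \<bullet> (matrix_inv C *v \<xi>) > 0"
proof -
  define y where "y = matrix_inv C *v \<xi>"
  have Cy: "C *v y = \<xi>"
    unfolding y_def using matrix_inv_cancel(1)[OF pos_def_invertible[OF pd]] .
  with \<open>\<xi> \<noteq> 0\<close> have "y \<noteq> 0" by auto
  then have "y \<bullet> (C *v y) > 0" using pd by blast
  with Cy show ?thesis by (simp add: y_def inner_commute)
qed

lemma det_scaleR:
  fixes A :: "real^'n^'n"
  shows "det (k *\<^sub>R A) = k ^ CARD('n) * det A"
  unfolding det_def by (simp add: prod.distrib sum_distrib_left mult_ac)

lemma matrix_inv_scaleR_mult:
  fixes A :: "real^'n^'n"
  assumes A: "invertible A" and "k \<noteq> 0"
  shows "matrix_inv (k *\<^sub>R A) *v x = inverse k *\<^sub>R (matrix_inv A *v x)"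
proof -
  have kA: "invertible (k *\<^sub>R A)" using scalar_invertible assms by blast
  have "(k *\<^sub>R A) *v (inverse k *\<^sub>R (matrix_inv A *v x)) = x"
    by (simp only: scaleR_matrix_vector_assoc[symmetric] matrix_vector_mult_scaleR
        matrix_inv_cancel(1)[OF A] scaleR_scaleR left_inverse[OF \<open>k \<noteq> 0\<close>] scaleR_one)
  then show ?thesis
    using matrix_inv_cancel(2)[OF kA] by metis
qed

lemma qED_density_pos:
  fixes C :: "real^'n^'n"
  assumes "q > 0" and "invertible C" and "\<xi> \<bullet> (matrix_inv C *v \<xi>) > 0"
  shows "qED_density q C \<xi> > 0"
  using assms invertible_det_nz[of C] by (simp add: qED_density_def Let_def)

lemma qED_density_scaleR:
  fixes C :: "real^'n^'n"
  assumes k: "k > 0" and C: "invertible C" and r: "\<xi> \<bullet> (matrix_inv C *v \<xi>) > 0"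
  shows "qED_density q (k *\<^sub>R C) \<xi> =
    k powr (- q * real CARD('n) / 4)
    * exp ((1 - k powr (- q / 2)) * (\<xi> \<bullet> (matrix_inv C *v \<xi>)) powr (q / 2) / 2)
    * qED_density q C \<xi>"
proof -
  define N where "N = real CARD('n)"
  define r where "r = \<xi> \<bullet> (matrix_inv C *v \<xi>)"
  define d where "d = \<bar>det C\<bar>"
  define e where "e = (q / 2 - 1) * N / 2"
  define c where "c = q / 2 * (2 * pi) powr (- N / 2)"
  have "r > 0" using r by (simp add: r_def)
  have "d > 0" using C invertible_det_nz by (auto simp: d_def)
  have quad: "\<xi> \<bullet> (matrix_inv (k *\<^sub>R C) *v \<xi>) = r / k"
    using matrix_inv_scaleR_mult[OF C, of k \<xi>] k by (simp add: r_def divide_inverse_commute)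
  have det: "\<bar>det (k *\<^sub>R C)\<bar> powr (- 1 / 2) = k powr (- N / 2) * d powr (- 1 / 2)"
    using k \<open>d > 0\<close>
    by (simp add: det_scaleR abs_mult powr_mult powr_realpow[symmetric] powr_powr N_def d_def)
  have pow: "(r / k) powr e = k powr (- e) * r powr e"
    using k \<open>r > 0\<close> by (simp add: powr_divide powr_minus_divide)
  have k_pow: "k powr (- N / 2) * k powr (- e) = k powr (- q * N / 4)"
    unfolding powr_add[symmetric] by (rule arg_cong[where f = "(powr) k"]) (simp add: e_def field_simps)
  have exp_split: "exp (- 1 / 2 * (r / k) powr (q / 2))
      = exp ((1 - k powr (- q / 2)) * r powr (q / 2) / 2) * exp (- 1 / 2 * r powr (q / 2))"
    using k \<open>r > 0\<close>
    by (simp add: powr_divide powr_minus_divide exp_add[symmetric] algebra_simps)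
  have density_C: "qED_density q C \<xi> = c * d powr (- 1 / 2) * r powr e * exp (- 1 / 2 * r powr (q / 2))"
    unfolding qED_density_def Let_def by (simp add: c_def N_def e_def r_def d_def)
  have "qED_density q (k *\<^sub>R C) \<xi>
      = c * \<bar>det (k *\<^sub>R C)\<bar> powr (- 1 / 2) * (r / k) powr e * exp (- 1 / 2 * (r / k) powr (q / 2))"
    unfolding qED_density_def Let_def quad by (simp add: c_def N_def e_def)
  also have "\<dots> = (k powr (- N / 2) * k powr (- e)) * exp ((1 - k powr (- q / 2)) * r powr (q / 2) / 2)
      * (c * d powr (- 1 / 2) * r powr e * exp (- 1 / 2 * r powr (q / 2)))"
    unfolding det pow exp_split by (simp only: mult_ac)
  finally show ?thesis
    unfolding k_pow density_C[symmetric] by (simp add: N_def r_def)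
qed

lemma qED_density_scaleR_powr:
  fixes C :: "real^'n^'n"
  assumes "\<tau> > 0" and "q > 0" and "invertible C" and "\<xi> \<bullet> (matrix_inv C *v \<xi>) > 0"
  shows "qED_density q (\<tau> powr (2 / q) *\<^sub>R C) \<xi> =
    \<tau> powr (- real CARD('n) / 2)
    * exp ((1 - 1 / \<tau>) * (\<xi> \<bullet> (matrix_inv C *v \<xi>)) powr (q / 2) / 2)
    * qED_density q C \<xi>"
proof -
  have "(\<tau> powr (2 / q)) powr (- q * real CARD('n) / 4) = \<tau> powr (- real CARD('n) / 2)"
    and "(\<tau> powr (2 / q)) powr (- q / 2) = 1 / \<tau>"
    using assms(1,2) by (simp_all add: powr_powr powr_minus_divide)
  then show ?thesis
    using qED_density_scaleR[of "\<tau> powr (2 / q)" C \<xi> q] assms by simp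
qed

lemma prod_qED_density_scaleR_powr:
  fixes C :: "real^'n^'n" and \<xi> :: "nat \<Rightarrow> real^'n"
  assumes "\<tau> > 0" and "q > 0" and "invertible C" and "\<forall>l<L. \<xi> l \<bullet> (matrix_inv C *v \<xi> l) > 0"
  shows "(\<Prod>l<L. qED_density q (\<tau> powr (2 / q) *\<^sub>R C) (\<xi> l)) =
    \<tau> powr (- real CARD('n) * real L / 2)
    * exp ((1 - 1 / \<tau>) * (\<Sum>l<L. (\<xi> l \<bullet> (matrix_inv C *v \<xi> l)) powr (q / 2)) / 2)
    * (\<Prod>l<L. qED_density q C (\<xi> l))"
proof -
  have "(\<Prod>l<L. qED_density q (\<tau> powr (2 / q) *\<^sub>R C) (\<xi> l)) =
      (\<Prod>l<L. \<tau> powr (- real CARD('n) / 2)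
        * exp ((1 - 1 / \<tau>) * (\<xi> l \<bullet> (matrix_inv C *v \<xi> l)) powr (q / 2) / 2)
        * qED_density q C (\<xi> l))"
    using qED_density_scaleR_powr[OF assms(1-3)] assms(4) by (intro prod.cong) auto
  also have "\<dots> = (\<tau> powr (- real CARD('n) / 2)) ^ L
      * exp (\<Sum>l<L. (1 - 1 / \<tau>) * (\<xi> l \<bullet> (matrix_inv C *v \<xi> l)) powr (q / 2) / 2)
      * (\<Prod>l<L. qED_density q C (\<xi> l))"
    by (simp add: prod.distrib exp_sum)
  also have "\<dots> = \<tau> powr (- real CARD('n) * real L / 2)
      * exp ((1 - 1 / \<tau>) * (\<Sum>l<L. (\<xi> l \<bullet> (matrix_inv C *v \<xi> l)) powr (q / 2)) / 2)
      * (\<Prod>l<L. qED_density q C (\<xi> l))"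
    using \<open>\<tau> > 0\<close>
    by (simp add: powr_power sum_divide_distrib sum_distrib_left mult_ac)
  finally show ?thesis .
qed

lemma joint_density_conjugate:
  fixes C0 :: "real^'n^'n" and xi :: "nat \<Rightarrow> real^'n"
  assumes "q > 0" and "\<alpha> > 0" and "\<beta> > 0"
    and pd: "\<forall>x. x \<noteq> 0 \<longrightarrow> x \<bullet> (C0 *v x) > 0" and "\<forall>l<L. xi l \<noteq> 0"
  shows "\<exists>K>0. joint_density q \<alpha> \<beta> C0 L xi = (\<lambda>\<tau>. K * inv_gamma_density
    (\<alpha> + real CARD('n) * real L / 2)
    (\<beta> + 1 / 2 * (\<Sum>l<L. (xi l \<bullet> (matrix_inv C0 *v xi l)) powr (q / 2))) \<tau>)"
proof -
  define m where "m = real CARD('n) * real L / 2"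
  define s where "s = 1 / 2 * (\<Sum>l<L. (xi l \<bullet> (matrix_inv C0 *v xi l)) powr (q / 2))"
  define P where "P = (\<Prod>l<L. qED_density q C0 (xi l))"
  define K where "K = exp s * P * (\<beta> powr \<alpha> / Gamma \<alpha> * (Gamma (\<alpha> + m) / (\<beta> + s) powr (\<alpha> + m)))"
  have C0: "invertible C0"
    using pd by (rule pos_def_invertible)
  have quad_pos: "\<forall>l<L. xi l \<bullet> (matrix_inv C0 *v xi l) > 0"
    using pos_def_matrix_inv_quadratic_pos[OF pd] assms(5) by blast
  have "m \<ge> 0" and "s \<ge> 0"
    by (simp_all add: m_def s_def sum_nonneg)
  then have posterior_params: "\<alpha> + m > 0" "\<beta> + s > 0"
    using \<open>\<alpha> > 0\<close> \<open>\<beta> > 0\<close> by simp_all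
  have "P > 0"
    unfolding P_def using qED_density_pos[OF \<open>q > 0\<close> C0] quad_pos by (intro prod_pos) auto
  then have "K > 0"
    using \<open>\<alpha> > 0\<close> \<open>\<beta> > 0\<close> posterior_params by (simp add: K_def Gamma_real_pos)
  moreover have "joint_density q \<alpha> \<beta> C0 L xi \<tau> = K * inv_gamma_density (\<alpha> + m) (\<beta> + s) \<tau>" for \<tau>
  proof (cases "\<tau> > 0")
    case True
    have "exp ((1 - 1 / \<tau>) * (\<Sum>l<L. (xi l \<bullet> (matrix_inv C0 *v xi l)) powr (q / 2)) / 2)
        = exp s * exp (- s / \<tau>)"
      by (simp add: s_def exp_add[symmetric] field_simps)
    then have "joint_density q \<alpha> \<beta> C0 L xi \<tau>
        = inv_gamma_density \<alpha> \<beta> \<tau> * (\<tau> powr (- m) * exp (- s / \<tau>)) * (exp s * P)"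
      unfolding joint_density_def prod_qED_density_scaleR_powr[OF True \<open>q > 0\<close> C0 quad_pos]
      by (simp add: m_def P_def mult_ac)
    also have "\<dots> = K * inv_gamma_density (\<alpha> + m) (\<beta> + s) \<tau>"
      unfolding inv_gamma_density_mult_conjugate[OF posterior_params] K_def by (simp only: mult_ac)
    finally show ?thesis .
  qed (simp add: joint_density_def inv_gamma_density_def)
  ultimately show ?thesis
    unfolding m_def s_def by blast
qed

theorem proposition5p1:
  fixes q \<alpha> \<beta> :: real and L :: nat and C0 :: "real^'n^'n" and xi :: "nat \<Rightarrow> real^'n"
  assumes "1 \<le> q" and "q \<le> 2"
    and "\<alpha> > 0" and "\<beta> > 0"
    and "transpose C0 = C0"
    and "\<forall>x. x \<noteq> 0 \<longrightarrow> x \<bullet> (C0 *v x) > 0"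
    and "\<forall>l<L. xi l \<noteq> 0"
  shows "\<forall>\<tau>. posterior_density q \<alpha> \<beta> C0 L xi \<tau> =
           inv_gamma_density (\<alpha> + real CARD('n) * real L / 2)
             (\<beta> + 1 / 2 * (\<Sum>l<L. (xi l \<bullet> (matrix_inv C0 *v xi l)) powr (q / 2))) \<tau>"
proof
  fix \<tau>
  let ?a = "\<alpha> + real CARD('n) * real L / 2"
  let ?b = "\<beta> + 1 / 2 * (\<Sum>l<L. (xi l \<bullet> (matrix_inv C0 *v xi l)) powr (q / 2))"
  obtain K where "K > 0" and joint: "joint_density q \<alpha> \<beta> C0 L xi = (\<lambda>\<tau>. K * inv_gamma_density ?a ?b \<tau>)"
    using joint_density_conjugate[of q \<alpha> \<beta> C0 L xi] assms by auto
  have "?a > 0" and "?b > 0"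
    using \<open>\<alpha> > 0\<close> \<open>\<beta> > 0\<close> by (simp_all add: add_pos_nonneg sum_nonneg)
  then have "integral\<^sup>L lborel (joint_density q \<alpha> \<beta> C0 L xi) = K"
    unfolding joint by (simp add: integral_inv_gamma_density)
  then show "posterior_density q \<alpha> \<beta> C0 L xi \<tau> = inv_gamma_density ?a ?b \<tau>"
    unfolding posterior_density_def using \<open>K > 0\<close> by (simp add: joint)
qed

end
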